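(* Let $d,n$ be positive integers and let $\mathcal D$ be a Ferrers diagram of order $n$ with $\mathcal D\cap\{d-1,\dots,n\}^2\ne\emptyset$, such that $(\mathcal D,d)$ is in $(a,b)$-standard form. Then for all $i\in\{1,\dots,d-1\}$, $$\nu_i(\mathcal D,d)-\nu_{i-1}(\mathcal D,d)=b-a+d-2i+c_{d-i}(X)-c_i(Y),$$ and consequently, for all $j\in\{1,\dots,d-1\}$, $$\nu_j(\mathcal D,d)-\nu_0(\mathcal D,d)=j(b-a+d-1-j)+\sum_{i=1}^{j}c_{d-i}(X)-\sum_{i=1}^{j}c_i(Y).$$
   Context: A Ferrers diagram is a finite $\mathcal D\subseteq\{1,2,\dots\}^2$ such that $(x,y)\in\mathcal D$ implies $(i,j)\in\mathcal D$ for all $1\le i\le x$, $1\le j\le y$ (first coordinate = row, second = column); order $n$ means $\mathcal D\subseteq\{1,\dots,n\}^2$. For $0\le j\le d-1$, $\nu_j(\mathcal D,d)$ is the number of $(x,y)\in\mathcal D$ with $x\ge d-j$ and $y\ge j+1$ (equivalently $\sum_{i\ge j+1}\max\{0,c_i-d+j\}$ with $c_i$ the column heights). For integers $a,b\ge d-1$, $(\mathcal D,d)$ is in $(a,b)$-standard form if $\mathcal D\cap\{d-1,\dots,n\}^2=\{d-1,\dots,a\}\times\{d-1,\dots,b\}$. In that case, for $i\in\{1,\dots,d-2\}$, $c_i(X)=|\{y>b:(i,y)\in\mathcal D\}|$ and $c_i(Y)=|\{x>a:(x,i)\in\mathcal D\}|$, and by convention $c_{d-1}(X)=c_{d-1}(Y)=0$.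 *)

theory Defs
  imports Main
begin

(* Ferrers diagram: finite, contained in positive coordinates, downward closed.
   First coordinate = row, second = column. *)
definition ferrers :: "(nat \<times> nat) set \<Rightarrow> bool" where
  "ferrers D \<longleftrightarrow> finite D \<and> (\<forall>(x,y)\<in>D. x \<ge> 1 \<and> y \<ge> 1) \<and>
     (\<forall>x y i j. (x,y) \<in> D \<and> 1 \<le> i \<and> i \<le> x \<and> 1 \<le> j \<and> j \<le> y \<longrightarrow> (i,j) \<in> D)"

definition ferrers_of_order :: "(nat \<times> nat) set \<Rightarrow> nat \<Rightarrow> bool" where
  "ferrers_of_order D n \<longleftrightarrow> ferrers D \<and> D \<subseteq> {1..n} \<times> {1..n}"

(* nu_j(D,d), meaningful for 0 \<le> j \<le> d-1 *)
definition nu :: "(nat \<times> nat) set \<Rightarrow> nat \<Rightarrow> nat \<Rightarrow> nat" where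
  "nu D d j = card {(x,y) \<in> D. x \<ge> d - j \<and> y \<ge> j + 1}"

definition standard_form :: "(nat \<times> nat) set \<Rightarrow> nat \<Rightarrow> nat \<Rightarrow> nat \<Rightarrow> nat \<Rightarrow> bool" where
  "standard_form D n d a b \<longleftrightarrow> a \<ge> d - 1 \<and> b \<ge> d - 1 \<and>
     D \<inter> ({d-1..n} \<times> {d-1..n}) = {d-1..a} \<times> {d-1..b}"

definition cX :: "(nat \<times> nat) set \<Rightarrow> nat \<Rightarrow> nat \<Rightarrow> nat \<Rightarrow> nat" where
  "cX D d b i = (if i = d - 1 then 0 else card {y. y > b \<and> (i,y) \<in> D})"

definition cY :: "(nat \<times> nat) set \<Rightarrow> nat \<Rightarrow> nat \<Rightarrow> nat \<Rightarrow> nat" where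
  "cY D d a i = (if i = d - 1 then 0 else card {x. x > a \<and> (x,i) \<in> D})"

end

theory Submission
  imports Defs
begin

text \<open>Write \<open>r = d - i\<close>. Then \<open>\<nu>\<^sub>i\<close> and \<open>\<nu>\<^sub>i\<^sub>-\<^sub>1\<close> count the cells of the quadrant
  \<open>x \<ge> r, y \<ge> i\<close> with its first column, resp. its first row, removed; so their difference
  is the length of the row \<open>r\<close> minus the length of the column \<open>i\<close> inside that quadrant.
  In standard form the corner \<open>(a, b)\<close> lies in the diagram, so the row consists of
  \<open>b - i + 1\<close> cells up to column \<open>b\<close> plus the \<open>c\<^sub>r(X)\<close> cells beyond it, and similarly
  for the column.\<close>

definition quadrant :: "(nat \<times> nat) set \<Rightarrow> nat \<Rightarrow> nat \<Rightarrow> (nat \<times> nat) set" where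
  "quadrant D x y = {(p, q) \<in> D. x \<le> p \<and> y \<le> q}"

lemma nu_eq_card_quadrant: "nu D d j = card (quadrant D (d - j) (j + 1))"
  unfolding nu_def quadrant_def by simp

lemma finite_quadrant: "finite D \<Longrightarrow> finite (quadrant D x y)"
  unfolding quadrant_def by (rule finite_subset[of _ D]) auto

lemma card_quadrant_split_row:
  assumes "finite D"
  shows "card (quadrant D x y) = card {q. (x, q) \<in> D \<and> y \<le> q} + card (quadrant D (Suc x) y)"
proof -
  have split: "quadrant D x y = Pair x ` {q. (x, q) \<in> D \<and> y \<le> q} \<union> quadrant D (Suc x) y"
    unfolding quadrant_def by (auto simp: Suc_le_eq le_less)
  have "finite {q. (x, q) \<in> D \<and> y \<le> q}"
    using assms by (intro finite_subset[OF _ finite_imageI[of D snd]]) force+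
  then show ?thesis
    using finite_quadrant[OF assms] unfolding split
    by (subst card_Un_disjoint) (auto simp: quadrant_def card_image inj_on_def)
qed

lemma card_quadrant_split_col:
  assumes "finite D"
  shows "card (quadrant D x y) = card {p. (p, y) \<in> D \<and> x \<le> p} + card (quadrant D x (Suc y))"
proof -
  have split: "quadrant D x y = (\<lambda>p. (p, y)) ` {p. (p, y) \<in> D \<and> x \<le> p} \<union> quadrant D x (Suc y)"
    unfolding quadrant_def by (auto simp: Suc_le_eq le_less)
  have "finite {p. (p, y) \<in> D \<and> x \<le> p}"
    using assms by (intro finite_subset[OF _ finite_imageI[of D fst]]) force+
  then show ?thesis
    using finite_quadrant[OF assms] unfolding split
    by (subst card_Un_disjoint) (auto simp: quadrant_def card_image inj_on_def)
qed

lemma nu_step_card_row_col: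
  assumes "finite D" and "1 \<le> i" and "i < d"
  shows "nu D d i + card {p. (p, i) \<in> D \<and> d - i \<le> p}
       = nu D d (i - 1) + card {q. (d - i, q) \<in> D \<and> i \<le> q}"
proof -
  have "d - (i - 1) = Suc (d - i)" and "i - 1 + 1 = i"
    using assms by auto
  then have "nu D d (i - 1) = card (quadrant D (Suc (d - i)) i)"
    by (simp add: nu_eq_card_quadrant)
  then show ?thesis
    using card_quadrant_split_row[OF assms(1), of "d - i" i]
      card_quadrant_split_col[OF assms(1), of "d - i" i]
    by (simp add: nu_eq_card_quadrant)
qed

lemma ferrers_swap: "ferrers D \<Longrightarrow> ferrers (prod.swap ` D)"
  unfolding ferrers_def by fastforce

lemma ferrers_card_row_tail:
  assumes "ferrers D" and "(a, b) \<in> D" and "1 \<le> r" "r \<le> a" and "1 \<le> i" "i \<le> Suc b"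
  shows "card {q. (r, q) \<in> D \<and> i \<le> q} = Suc b - i + card {q. b < q \<and> (r, q) \<in> D}"
proof -
  have split: "{q. (r, q) \<in> D \<and> i \<le> q} = {i..b} \<union> {q. b < q \<and> (r, q) \<in> D}"
    using assms unfolding ferrers_def by auto
  have "finite {q. b < q \<and> (r, q) \<in> D}"
    using assms(1) unfolding ferrers_def
    by (intro finite_subset[OF _ finite_imageI[of D snd]]) force+
  then show ?thesis
    unfolding split by (subst card_Un_disjoint) auto
qed

lemma ferrers_card_col_tail:
  assumes "ferrers D" and "(a, b) \<in> D" and "1 \<le> i" "i \<le> b" and "1 \<le> r" "r \<le> Suc a"
  shows "card {p. (p, i) \<in> D \<and> r \<le> p} = Suc a - r + card {p. a < p \<and> (p, i) \<in> D}"
proof -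
  have swap_mem: "(q, p) \<in> prod.swap ` D \<longleftrightarrow> (p, q) \<in> D" for p q
    by force
  show ?thesis
    using ferrers_card_row_tail[OF ferrers_swap[OF assms(1)], of b a i r] assms(2-6)
    by (simp add: swap_mem)
qed

lemma standard_form_box_subset:
  "standard_form D n d a b \<Longrightarrow> {d - 1..a} \<times> {d - 1..b} \<subseteq> D"
  unfolding standard_form_def by blast

lemma standard_form_corner_mem: "standard_form D n d a b \<Longrightarrow> (a, b) \<in> D"
  using standard_form_box_subset unfolding standard_form_def by fastforce

lemma standard_form_last_row_bound:
  assumes "standard_form D n d a b" and "D \<subseteq> {1..n} \<times> {1..n}" and "(d - 1, q) \<in> D"
  shows "q \<le> b"
proof (rule ccontr)
  have box: "D \<inter> ({d-1..n} \<times> {d-1..n}) = {d-1..a} \<times> {d-1..b}" and "d - 1 \<le> b"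
    using assms(1) unfolding standard_form_def by auto
  assume "\<not> q \<le> b"
  with assms(2,3) \<open>d - 1 \<le> b\<close> have "(d - 1, q) \<in> D \<inter> ({d-1..n} \<times> {d-1..n})"
    by auto
  with \<open>\<not> q \<le> b\<close> show False
    unfolding box by auto
qed

lemma standard_form_last_col_bound:
  assumes "standard_form D n d a b" and "D \<subseteq> {1..n} \<times> {1..n}" and "(p, d - 1) \<in> D"
  shows "p \<le> a"
proof (rule ccontr)
  have box: "D \<inter> ({d-1..n} \<times> {d-1..n}) = {d-1..a} \<times> {d-1..b}" and "d - 1 \<le> a"
    using assms(1) unfolding standard_form_def by auto
  assume "\<not> p \<le> a"
  with assms(2,3) \<open>d - 1 \<le> a\<close> have "(p, d - 1) \<in> D \<inter> ({d-1..n} \<times> {d-1..n})"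
    by auto
  with \<open>\<not> p \<le> a\<close> show False
    unfolding box by auto
qed

lemma standard_form_cX:
  assumes "standard_form D n d a b" and "D \<subseteq> {1..n} \<times> {1..n}"
  shows "cX D d b r = card {q. b < q \<and> (r, q) \<in> D}"
proof (cases "r = d - 1")
  case True
  then have "{q. b < q \<and> (r, q) \<in> D} = {}"
    using standard_form_last_row_bound[OF assms] by force
  then have "card {q. b < q \<and> (r, q) \<in> D} = 0"
    by (simp only: card.empty)
  with True show ?thesis
    unfolding cX_def by simp
next
  case False
  then show ?thesis
    unfolding cX_def by simp
qed

lemma standard_form_cY:
  assumes "standard_form D n d a b" and "D \<subseteq> {1..n} \<times> {1..n}"
  shows "cY D d a i = card {p. a < p \<and> (p, i) \<in> D}"
proof (cases "i = d - 1")
  case True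
  then have "{p. a < p \<and> (p, i) \<in> D} = {}"
    using standard_form_last_col_bound[OF assms] by force
  then have "card {p. a < p \<and> (p, i) \<in> D} = 0"
    by (simp only: card.empty)
  with True show ?thesis
    unfolding cY_def by simp
next
  case False
  then show ?thesis
    unfolding cY_def by simp
qed

lemma standard_form_nu_step:
  assumes "ferrers_of_order D n" and "standard_form D n d a b" and "1 \<le> i" "i \<le> d - 1"
  shows "int (nu D d i) - int (nu D d (i - 1)) =
           int b - int a + int d - 2 * int i + int (cX D d b (d - i)) - int (cY D d a i)"
proof -
  have ferrers: "ferrers D" and order: "D \<subseteq> {1..n} \<times> {1..n}"
    using assms(1) unfolding ferrers_of_order_def by auto
  have "d - 1 \<le> a" "d - 1 \<le> b"
    using assms(2) unfolding standard_form_def by auto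
  have corner: "(a, b) \<in> D"
    using assms(2) by (rule standard_form_corner_mem)
  have "nu D d i + card {p. (p, i) \<in> D \<and> d - i \<le> p}
      = nu D d (i - 1) + card {q. (d - i, q) \<in> D \<and> i \<le> q}"
    using ferrers assms(3,4) by (intro nu_step_card_row_col) (auto simp: ferrers_def)
  also have "card {q. (d - i, q) \<in> D \<and> i \<le> q} = Suc b - i + cX D d b (d - i)"
    using ferrers_card_row_tail[OF ferrers corner] assms(3,4) \<open>d - 1 \<le> a\<close> \<open>d - 1 \<le> b\<close>
    by (simp add: standard_form_cX[OF assms(2) order])
  also have "card {p. (p, i) \<in> D \<and> d - i \<le> p} = Suc a - (d - i) + cY D d a i"
    using ferrers_card_col_tail[OF ferrers corner] assms(3,4) \<open>d - 1 \<le> a\<close> \<open>d - 1 \<le> b\<close>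
    by (simp add: standard_form_cY[OF assms(2) order])
  finally show ?thesis
    using assms(3,4) \<open>d - 1 \<le> a\<close> \<open>d - 1 \<le> b\<close> by linarith
qed

lemma telescope_quadratic:
  fixes f u v :: "nat \<Rightarrow> int" and c :: int
  assumes "\<And>i. 1 \<le> i \<Longrightarrow> i \<le> j \<Longrightarrow> f i - f (i - 1) = c - 2 * int i + u i - v i"
  shows "f j - f 0 = int j * (c - 1 - int j) + (\<Sum>i=1..j. u i) - (\<Sum>i=1..j. v i)"
  using assms
proof (induction j)
  case 0
  then show ?case by simp
next
  case (Suc j)
  have "f (Suc j) - f j = c - 2 * int (Suc j) + u (Suc j) - v (Suc j)"
    using Suc.prems[of "Suc j"] by simp
  with Suc show ?case
    by (simp add: algebra_simps)
qed

theorem proposition4p11: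
  fixes D :: "(nat \<times> nat) set" and d n a b :: nat
  assumes "d \<ge> 1" and "n \<ge> 1"
    and "ferrers_of_order D n"
    and "D \<inter> ({d-1..n} \<times> {d-1..n}) \<noteq> {}"
    and "standard_form D n d a b"
  shows "(\<forall>i\<in>{1..d-1}. int (nu D d i) - int (nu D d (i - 1)) =
            int b - int a + int d - 2 * int i + int (cX D d b (d - i)) - int (cY D d a i))
       \<and> (\<forall>j\<in>{1..d-1}. int (nu D d j) - int (nu D d 0) =
            int j * (int b - int a + int d - 1 - int j)
            + (\<Sum>i=1..j. int (cX D d b (d - i))) - (\<Sum>i=1..j. int (cY D d a i)))"
proof -
  have step: "\<forall>i\<in>{1..d-1}. int (nu D d i) - int (nu D d (i - 1)) =
            int b - int a + int d - 2 * int i + int (cX D d b (d - i)) - int (cY D d a i)"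
    using standard_form_nu_step[OF assms(3,5)] by auto
  moreover have "int (nu D d j) - int (nu D d 0) =
            int j * (int b - int a + int d - 1 - int j)
            + (\<Sum>i=1..j. int (cX D d b (d - i))) - (\<Sum>i=1..j. int (cY D d a i))"
    if "j \<in> {1..d-1}" for j
    using that step by (intro telescope_quadratic[where c = "int b - int a + int d"]) auto
  ultimately show ?thesis
    by blast
qed

end
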